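(* Let $A$ be a set of positive integers with $1\in A$. Then $G(0,A)=0$ and, for every $n\ge1$, $G(n,A)=G(n-1,A)+x$, where $x$ is the smallest element of $A$ with $\mathrm{gap}(x)>G(n-1,A)$ (if no such $x$ exists, then no integer causes the greedy algorithm to use $n$ or more coins).
   Context: For $x\in A$, let $\mathrm{gap}(x)=x'-x$ where $x'$ is the smallest element of $A$ greater than $x$, with $\mathrm{gap}(x)=\infty$ if $x=\max A$. The greedy change-making algorithm with coin values $A$, applied to a nonnegative integer $s$, uses no coins if $s=0$, and otherwise selects the largest $c\in A$ with $c\le s$ and then recursively makes change for $s-c$; the number of coins it uses is the total number of selections made. For $n\ge0$, $G(n,A)$ denotes the smallest nonnegative integer $s$ for which the greedy change-making algorithm with coin values $A$ uses at least $n$ coins. *)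

theory Defs
  imports Main "HOL-Library.Extended_Nat"
begin

definition gap :: "nat set \<Rightarrow> nat \<Rightarrow> enat" where
  "gap A x = (if \<exists>y\<in>A. x < y then enat ((LEAST y. y \<in> A \<and> x < y) - x) else \<infinity>)"

inductive greedy_uses :: "nat set \<Rightarrow> nat \<Rightarrow> nat \<Rightarrow> bool" for A where
  zero: "greedy_uses A 0 0"
| step: "\<lbrakk>0 < s; c = Max {c\<in>A. c \<le> s}; greedy_uses A (s - c) k\<rbrakk>
          \<Longrightarrow> greedy_uses A s (Suc k)"

definition G :: "nat \<Rightarrow> nat set \<Rightarrow> nat" where
  "G n A = (LEAST s. \<exists>k. greedy_uses A s k \<and> n \<le> k)"

end

theory Submission
  imports Defs
begin

text \<open>Let \<open>g = G(n-1,A)\<close>. The greedy run on \<open>G(n,A)\<close> first takes a coin \<open>c\<close> and leaves a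
  remainder using at least \<open>n - 1\<close> coins, so the remainder is at least \<open>g\<close>; since \<open>c\<close> was the
  largest coin not exceeding the amount, no coin lies in \<open>(c, c + g]\<close>, i.e. \<open>gap(c) > g\<close>.
  Conversely, if \<open>gap(x) > g\<close> then greedy on \<open>g + x\<close> takes \<open>x\<close> first and then needs \<open>n - 1\<close>
  coins for \<open>g\<close>. Hence \<open>G(n,A) = g + min {x. gap(x) > g}\<close>.\<close>

lemma enat_less_gap_iff:
  "enat d < gap A x \<longleftrightarrow> (\<forall>y\<in>A. x < y \<longrightarrow> x + d < y)"
proof (cases "\<exists>y\<in>A. x < y")
  case True
  define y0 where "y0 = (LEAST y. y \<in> A \<and> x < y)"
  have y0: "y0 \<in> A" "x < y0"
    using LeastI_ex[of "\<lambda>y. y \<in> A \<and> x < y"] True unfolding y0_def by auto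
  have y0_least: "y0 \<le> y" if "y \<in> A" "x < y" for y
    unfolding y0_def using that by (intro Least_le) simp
  have "gap A x = enat (y0 - x)"
    unfolding gap_def y0_def using True by simp
  then show ?thesis
    using y0 y0_least by fastforce
next
  case False
  then show ?thesis
    unfolding gap_def by auto
qed

lemma finite_coins_le: "finite {c \<in> A. c \<le> (s::nat)}"
  by (rule finite_subset[of _ "{..s}"]) auto

lemma remainder_less_gap_greedy_coin:
  assumes "c = Max {c \<in> A. c \<le> s}" and "c \<in> A" and "c \<le> s"
  shows "enat (s - c) < gap A c"
  unfolding enat_less_gap_iff
proof (intro ballI impI)
  fix y assume "y \<in> A" "c < y"
  have "\<not> y \<le> s"
  proof
    assume "y \<le> s"
    then have "y \<le> c"
      using assms(1) \<open>y \<in> A\<close> finite_coins_le by (simp add: Max_ge)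
    with \<open>c < y\<close> show False by simp
  qed
  with assms(3) show "c + (s - c) < y" by simp
qed

lemma greedy_coin_eq_if_less_gap:
  assumes "x \<in> A" and "enat d < gap A x"
  shows "Max {c \<in> A. c \<le> d + x} = x"
proof (rule Max_eqI)
  show "y \<le> x" if "y \<in> {c \<in> A. c \<le> d + x}" for y
    using that assms(2) unfolding enat_less_gap_iff by (metis add.commute leI mem_Collect_eq not_le)
qed (use assms(1) finite_coins_le in auto)

lemma G_le: "greedy_uses A s k \<Longrightarrow> m \<le> k \<Longrightarrow> G m A \<le> s"
  unfolding G_def by (rule Least_le) blast

lemma G_attained:
  assumes "\<exists>s k. greedy_uses A s k \<and> m \<le> k"
  shows "\<exists>k. greedy_uses A (G m A) k \<and> m \<le> k"
  unfolding G_def using assms by (rule LeastI_ex[where P = "\<lambda>s. \<exists>k. greedy_uses A s k \<and> m \<le> k"])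

lemma G_0: "G 0 A = 0"
  unfolding G_def by (rule Least_equality) (auto intro: greedy_uses.zero)

context
  fixes A :: "nat set"
  assumes pos: "\<forall>a\<in>A. 0 < a" and one: "1 \<in> A"
begin

lemma greedy_coin_props:
  assumes "0 < s"
  shows "Max {c \<in> A. c \<le> s} \<in> A" "Max {c \<in> A. c \<le> s} \<le> s" "0 < Max {c \<in> A. c \<le> s}"
proof -
  have "{c \<in> A. c \<le> s} \<noteq> {}" using one assms by auto
  then have "Max {c \<in> A. c \<le> s} \<in> {c \<in> A. c \<le> s}"
    using finite_coins_le by (rule Max_in[rotated])
  then show "Max {c \<in> A. c \<le> s} \<in> A" "Max {c \<in> A. c \<le> s} \<le> s" "0 < Max {c \<in> A. c \<le> s}"
    using pos by auto
qed

text \<open>The least amount needing at least \<open>m\<close> coins needs exactly \<open>m\<close>: one coin fewer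
  would leave a smaller remainder still needing \<open>m\<close> coins.\<close>
lemma greedy_uses_G:
  assumes "\<exists>s k. greedy_uses A s k \<and> m \<le> k"
  shows "greedy_uses A (G m A) m"
proof -
  obtain k where k: "greedy_uses A (G m A) k" "m \<le> k"
    using G_attained[OF assms] by blast
  have "k \<le> m"
    using k(1)
  proof (cases rule: greedy_uses.cases)
    case (step c k')
    have "0 < c" using greedy_coin_props(3) step(2,3) by simp
    have "\<not> m \<le> k'"
    proof
      assume "m \<le> k'"
      then have "G m A \<le> G m A - c" using G_le step(4) by blast
      with \<open>0 < c\<close> step(2) show False by simp
    qed
    then show ?thesis using step(1) by simp
  qed simp
  with k show ?thesis by simp
qed

lemma greedy_uses_Suc_bound:
  assumes "greedy_uses A s k" and "Suc m \<le> k"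
  obtains c where "c \<in> A" "enat (G m A) < gap A c" "G m A + c \<le> s"
  using assms(1)
proof (cases rule: greedy_uses.cases)
  case zero
  with assms(2) show ?thesis by simp
next
  case (step c k')
  have c: "c \<in> A" "c \<le> s" using greedy_coin_props step(2,3) by auto
  have "G m A \<le> s - c" using G_le step(1,4) assms(2) by simp
  moreover have "enat (s - c) < gap A c"
    using remainder_less_gap_greedy_coin step(3) c by blast
  ultimately have "enat (G m A) < gap A c"
    by (meson enat_ord_simps(1) le_less_trans)
  with c \<open>G m A \<le> s - c\<close> show ?thesis by (intro that) auto
qed

lemma greedy_uses_G_add:
  assumes "\<exists>s k. greedy_uses A s k \<and> m \<le> k" and "x \<in> A" and "enat (G m A) < gap A x"
  shows "greedy_uses A (G m A + x) (Suc m)"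
proof (rule greedy_uses.step)
  show "0 < G m A + x" using pos assms(2) by auto
  show "x = Max {c \<in> A. c \<le> G m A + x}"
    using greedy_coin_eq_if_less_gap[OF assms(2,3)] by simp
  show "greedy_uses A (G m A + x - x) m"
    using greedy_uses_G[OF assms(1)] by simp
qed

lemma G_Suc:
  assumes "\<exists>s k. greedy_uses A s k \<and> m \<le> k" and "\<exists>x\<in>A. enat (G m A) < gap A x"
  shows "G (Suc m) A = G m A + (LEAST x. x \<in> A \<and> enat (G m A) < gap A x)"
proof -
  define x where "x = (LEAST x. x \<in> A \<and> enat (G m A) < gap A x)"
  have x: "x \<in> A" "enat (G m A) < gap A x"
    using LeastI_ex[of "\<lambda>x. x \<in> A \<and> enat (G m A) < gap A x"] assms(2)
    unfolding x_def by auto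
  have "G (Suc m) A = G m A + x"
    unfolding G_def[of "Suc m"]
  proof (rule Least_equality)
    show "\<exists>k. greedy_uses A (G m A + x) k \<and> Suc m \<le> k"
      using greedy_uses_G_add[OF assms(1) x] by blast
  next
    fix s assume "\<exists>k. greedy_uses A s k \<and> Suc m \<le> k"
    then obtain c where c: "c \<in> A" "enat (G m A) < gap A c" "G m A + c \<le> s"
      using greedy_uses_Suc_bound by metis
    then have "x \<le> c" unfolding x_def by (intro Least_le) simp
    with c(3) show "G m A + x \<le> s" by simp
  qed
  then show ?thesis by (simp add: x_def)
qed

lemma no_greedy_uses_Suc:
  assumes "\<not> (\<exists>x\<in>A. enat (G m A) < gap A x)"
  shows "\<not> (\<exists>s k. greedy_uses A s k \<and> Suc m \<le> k)"
  using assms greedy_uses_Suc_bound by metis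

end

theorem mainTheorem9:
  fixes A :: "nat set"
  assumes pos: "\<forall>a\<in>A. 0 < a" and one: "1 \<in> A"
  shows "G 0 A = 0 \<and>
    (\<forall>n\<ge>1. (\<exists>s k. greedy_uses A s k \<and> n - 1 \<le> k) \<longrightarrow>
       ((\<exists>x\<in>A. gap A x > enat (G (n - 1) A)) \<longrightarrow>
          G n A = G (n - 1) A + (LEAST x. x \<in> A \<and> gap A x > enat (G (n - 1) A)))
     \<and> ((\<not> (\<exists>x\<in>A. gap A x > enat (G (n - 1) A))) \<longrightarrow>
          \<not> (\<exists>s k. greedy_uses A s k \<and> n \<le> k)))"
proof (intro conjI allI impI)
  show "G 0 A = 0" by (rule G_0)
next
  fix n :: nat
  assume "n \<ge> 1" and ex: "\<exists>s k. greedy_uses A s k \<and> n - 1 \<le> k"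
  then obtain m where n: "n = Suc m" by (cases n) auto
  show "G n A = G (n - 1) A + (LEAST x. x \<in> A \<and> gap A x > enat (G (n - 1) A))"
    if "\<exists>x\<in>A. gap A x > enat (G (n - 1) A)"
    using G_Suc[OF pos one] ex that unfolding n by simp
  show "\<not> (\<exists>s k. greedy_uses A s k \<and> n \<le> k)"
    if "\<not> (\<exists>x\<in>A. gap A x > enat (G (n - 1) A))"
    using no_greedy_uses_Suc[OF pos one] that unfolding n by simp
qed

end
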